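(* Let $\mathbb{D}\subset\mathbb{C}$ be the unit disc and $\mathbb{B}^n\subset\mathbb{R}^n$, $n\ge 3$, the open unit ball. Assume $f:\mathbb{D}\to\mathbb{B}^n$ is a conformal minimal immersion. Then for every $a\in\mathbb{D}$, $$\|f(a)\|\ \le\ \frac{|a|+\|f(0)\|}{1+|a|\,\|f(0)\|}.$$
   Context: A conformal minimal immersion $f=f(x,y)$, $z=x+iy$, is a harmonic immersion satisfying $\langle f_x,f_x\rangle=\langle f_y,f_y\rangle$ and $\langle f_x,f_y\rangle=0$. $\|\cdot\|$ is the Euclidean norm. *)

theory Defs
  imports "HOL-Analysis.Analysis"
begin

definition conformal_minimal_immersion ::
  "(complex \<Rightarrow> 'a::euclidean_space) \<Rightarrow> complex set \<Rightarrow> bool" where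
  "conformal_minimal_immersion f U \<longleftrightarrow> open U \<and>
    (\<exists>fx fy fxx fxy fyx fyy.
      (\<forall>z\<in>U.
         (f has_derivative (\<lambda>h. Re h *\<^sub>R fx z + Im h *\<^sub>R fy z)) (at z) \<and>
         (fx has_derivative (\<lambda>h. Re h *\<^sub>R fxx z + Im h *\<^sub>R fxy z)) (at z) \<and>
         (fy has_derivative (\<lambda>h. Re h *\<^sub>R fyx z + Im h *\<^sub>R fyy z)) (at z) \<and>
         fxx z + fyy z = 0 \<and>
         inj (\<lambda>h. Re h *\<^sub>R fx z + Im h *\<^sub>R fy z) \<and>
         inner (fx z) (fx z) = inner (fy z) (fy z) \<and>
         inner (fx z) (fy z) = 0) \<and>
      continuous_on U fxx \<and> continuous_on U fxy \<and>
      continuous_on U fyx \<and> continuous_on U fyy)"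

end

theory Submission
  imports Defs "HOL-Complex_Analysis.Complex_Analysis"
begin

(* For a unit vector u, the derivative of |f| in direction u at z is at most
   (1 - |f z|^2) / (1 - |z|^2).  Write f z = s e with |e| = 1.  Conformality makes the
   differential map the orthonormal pair (u, i u) to an orthogonal pair (f_u, f_iu) of equal
   length, which yields a vector d orthogonal to e with |d| <= 1 and e.f_u <= d.f_iu.  As f is
   harmonic, e.f and d.f are real parts of holomorphic functions, and together they map the disc
   into the unit disc.  Precomposing with a disc automorphism sending 0 to z and averaging against
   cos and sin over circles (Cauchy's formula) bounds (1 + s^2) e.f_u + (1 - s^2) d.f_iu, hence e.f_u.
   Along a ray, rho t = |f (t a)| then satisfies rho' (1 - t^2 |a|^2) <= |a| (1 - rho^2) away from
   the zeros of rho, so artanh (rho t) - artanh (t |a|) is non-increasing after the last zero of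
   rho.  Hence artanh |f a| <= artanh |a| + artanh |f 0|, and the addition formula for tanh gives
   the claim. *)

section \<open>Symmetry of mixed partial derivatives\<close>

lemma has_vector_derivative_along_line:
  fixes c d :: complex
  assumes "(G has_derivative G') (at (c + of_real s * d))"
  shows "((\<lambda>s. G (c + of_real s * d)) has_vector_derivative G' d) (at s)"
proof -
  have line: "((\<lambda>s. c + of_real s * d) has_derivative (\<lambda>h. of_real h * d)) (at s)"
    by (auto intro!: derivative_eq_intros)
  have "linear G'"
    using assms has_derivative_linear by blast
  then have "G' (of_real h * d) = h *\<^sub>R G' d" for h
    using linear_scale[of G' h d] by (simp add: scaleR_conv_of_real)
  then show ?thesis
    using has_derivative_compose[OF line assms] by (simp add: has_vector_derivative_def o_def)
qed

lemma has_real_derivative_along_line: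
  fixes G :: "complex \<Rightarrow> real"
  assumes "(G has_derivative (\<lambda>h. Re h * Gx + Im h * Gy)) (at (c + of_real s * d))"
  shows "((\<lambda>s. G (c + of_real s * d)) has_real_derivative Re d * Gx + Im d * Gy) (at s)"
  using has_vector_derivative_along_line[OF assms]
  by (simp add: has_real_derivative_iff_has_vector_derivative)

lemma double_difference_mean_value:
  fixes G Gx Gxy :: "real \<Rightarrow> real \<Rightarrow> real"
  assumes "0 < h"
    and Gx: "\<And>x y. x \<in> {0..h} \<Longrightarrow> y \<in> {0..h} \<Longrightarrow> ((\<lambda>x. G x y) has_real_derivative Gx x y) (at x)"
    and Gxy: "\<And>x y. x \<in> {0..h} \<Longrightarrow> y \<in> {0..h} \<Longrightarrow> ((\<lambda>y. Gx x y) has_real_derivative Gxy x y) (at y)"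
  obtains \<xi> \<eta> where "\<xi> \<in> {0<..<h}" "\<eta> \<in> {0<..<h}" "G h h - G h 0 - G 0 h + G 0 0 = h * h * Gxy \<xi> \<eta>"
proof -
  have "((\<lambda>x. G x h - G x 0) has_real_derivative Gx x h - Gx x 0) (at x)" if "0 \<le> x" "x \<le> h" for x
    using Gx[of x h] Gx[of x 0] that \<open>0 < h\<close> by (intro DERIV_diff) auto
  from MVT2[OF \<open>0 < h\<close> this] obtain \<xi> where \<xi>: "0 < \<xi>" "\<xi> < h"
    and eq\<xi>: "(G h h - G h 0) - (G 0 h - G 0 0) = (h - 0) * (Gx \<xi> h - Gx \<xi> 0)"
    by blast
  have "(Gx \<xi> has_real_derivative Gxy \<xi> y) (at y)" if "0 \<le> y" "y \<le> h" for y
    using Gxy[of \<xi> y] that \<xi> by simp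
  from MVT2[OF \<open>0 < h\<close> this] obtain \<eta> where "0 < \<eta>" "\<eta> < h"
    and "Gx \<xi> h - Gx \<xi> 0 = (h - 0) * Gxy \<xi> \<eta>"
    by blast
  with \<xi> eq\<xi> show thesis
    by (intro that[of \<xi> \<eta>]) auto
qed

lemma mixed_partials_meet:
  fixes F p q pxx pxy qx qy :: "complex \<Rightarrow> real"
  assumes "open U" "z \<in> U"
    and F: "\<And>w. w \<in> U \<Longrightarrow> (F has_derivative (\<lambda>h. Re h * p w + Im h * q w)) (at w)"
    and p: "\<And>w. w \<in> U \<Longrightarrow> (p has_derivative (\<lambda>h. Re h * pxx w + Im h * pxy w)) (at w)"
    and q: "\<And>w. w \<in> U \<Longrightarrow> (q has_derivative (\<lambda>h. Re h * qx w + Im h * qy w)) (at w)"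
    and "\<delta> > 0"
  obtains w1 w2 where "w1 \<in> ball z \<delta>" "w2 \<in> ball z \<delta>" "pxy w1 = qx w2"
proof -
  define P where "P x y = z + of_real x + \<i> * of_real y" for x y
  have along_x: "((\<lambda>x. g (P x y)) has_real_derivative gx (P x y)) (at x)"
    if "(g has_derivative (\<lambda>h. Re h * gx (P x y) + Im h * gy (P x y))) (at (P x y))"
    for g gx gy :: "complex \<Rightarrow> real" and x y
    using has_real_derivative_along_line[of g "gx (P x y)" "gy (P x y)" "z + \<i> * of_real y" x 1] that
    by (simp add: P_def algebra_simps)
  have along_y: "((\<lambda>y. g (P x y)) has_real_derivative gy (P x y)) (at y)"
    if "(g has_derivative (\<lambda>h. Re h * gx (P x y) + Im h * gy (P x y))) (at (P x y))"
    for g gx gy :: "complex \<Rightarrow> real" and x y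
    using has_real_derivative_along_line[of g "gx (P x y)" "gy (P x y)" "z + of_real x" y \<i>] that
    by (simp add: P_def algebra_simps)
  obtain r where "r > 0" "ball z r \<subseteq> U"
    using \<open>open U\<close> \<open>z \<in> U\<close> openE by blast
  define h where "h = min r \<delta> / 3"
  have "h > 0"
    using \<open>r > 0\<close> \<open>\<delta> > 0\<close> by (simp add: h_def)
  have P_ball: "P x y \<in> ball z (min r \<delta>)" if "x \<in> {0..h}" "y \<in> {0..h}" for x y
  proof -
    have "dist z (P x y) \<le> norm (of_real x :: complex) + norm (\<i> * of_real y)"
      unfolding P_def dist_norm by (metis add_diff_cancel_left' norm_minus_commute norm_triangle_ineq add.assoc)
    also have "\<dots> \<le> 2 * h"
      using that by (simp add: norm_mult)
    finally show ?thesis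
      using \<open>r > 0\<close> \<open>\<delta> > 0\<close> unfolding h_def by (auto simp: min_def)
  qed
  then have P_U: "P x y \<in> U" if "x \<in> {0..h}" "y \<in> {0..h}" for x y
    using that \<open>ball z r \<subseteq> U\<close> by auto
  (* Expand the double difference of F over the square [0, h]^2 by the mean value theorem
     in both orders. *)
  obtain \<xi> \<eta> where \<xi>\<eta>: "\<xi> \<in> {0<..<h}" "\<eta> \<in> {0<..<h}"
    and "F (P h h) - F (P h 0) - F (P 0 h) + F (P 0 0) = h * h * pxy (P \<xi> \<eta>)"
    using double_difference_mean_value[of h "\<lambda>x y. F (P x y)" "\<lambda>x y. p (P x y)" "\<lambda>x y. pxy (P x y)"]
      \<open>h > 0\<close> P_U by (blast intro: along_x along_y F p)
  moreover obtain \<eta>' \<xi>' where \<xi>'\<eta>': "\<eta>' \<in> {0<..<h}" "\<xi>' \<in> {0<..<h}"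
    and "F (P h h) - F (P 0 h) - F (P h 0) + F (P 0 0) = h * h * qx (P \<xi>' \<eta>')"
    using double_difference_mean_value[of h "\<lambda>y x. F (P x y)" "\<lambda>y x. q (P x y)" "\<lambda>y x. qx (P x y)"]
      \<open>h > 0\<close> P_U by (blast intro: along_x along_y F q)
  ultimately have "h * h * pxy (P \<xi> \<eta>) = h * h * qx (P \<xi>' \<eta>')"
    by linarith
  then have "pxy (P \<xi> \<eta>) = qx (P \<xi>' \<eta>')"
    using \<open>h > 0\<close> by simp
  moreover have "P \<xi> \<eta> \<in> ball z \<delta>" "P \<xi>' \<eta>' \<in> ball z \<delta>"
    using P_ball \<xi>\<eta> \<xi>'\<eta>' by fastforce+
  ultimately show thesis
    using that by blast
qed

lemma mixed_partials_eq:
  fixes F p q pxx pxy qx qy :: "complex \<Rightarrow> real"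
  assumes "open U" "z \<in> U"
    and "\<And>w. w \<in> U \<Longrightarrow> (F has_derivative (\<lambda>h. Re h * p w + Im h * q w)) (at w)"
    and "\<And>w. w \<in> U \<Longrightarrow> (p has_derivative (\<lambda>h. Re h * pxx w + Im h * pxy w)) (at w)"
    and "\<And>w. w \<in> U \<Longrightarrow> (q has_derivative (\<lambda>h. Re h * qx w + Im h * qy w)) (at w)"
    and "continuous_on U pxy" "continuous_on U qx"
  shows "pxy z = qx z"
proof -
  have "\<bar>pxy z - qx z\<bar> < \<epsilon>" if "\<epsilon> > 0" for \<epsilon>
  proof -
    have "isCont pxy z" "isCont qx z"
      using assms continuous_on_eq_continuous_at by blast+
    then obtain \<delta>1 \<delta>2 where "\<delta>1 > 0" and \<delta>1: "\<And>w. dist w z < \<delta>1 \<Longrightarrow> dist (pxy w) (pxy z) < \<epsilon> / 2"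
      and "\<delta>2 > 0" and \<delta>2: "\<And>w. dist w z < \<delta>2 \<Longrightarrow> dist (qx w) (qx z) < \<epsilon> / 2"
      using \<open>\<epsilon> > 0\<close> continuous_at_eps_delta half_gt_zero by metis
    obtain w1 w2 where w: "w1 \<in> ball z (min \<delta>1 \<delta>2)" "w2 \<in> ball z (min \<delta>1 \<delta>2)" "pxy w1 = qx w2"
      using mixed_partials_meet[OF assms(1-5), of "min \<delta>1 \<delta>2"] \<open>\<delta>1 > 0\<close> \<open>\<delta>2 > 0\<close> by auto
    then have "dist w1 z < \<delta>1" "dist w2 z < \<delta>2"
      by (auto simp: dist_commute)
    then have "\<bar>pxy w1 - pxy z\<bar> < \<epsilon> / 2" "\<bar>qx w2 - qx z\<bar> < \<epsilon> / 2"
      using \<delta>1 \<delta>2 unfolding dist_real_def by blast+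
    with w(3) show ?thesis
      by linarith
  qed
  then show ?thesis
    by (metis abs_le_zero_iff eq_iff_diff_eq_0 less_irrefl not_le)
qed

section \<open>Harmonic functions as real parts of holomorphic functions\<close>

lemma Cauchy_Riemann_has_field_derivative:
  fixes u v :: "complex \<Rightarrow> real"
  assumes "(u has_derivative (\<lambda>h. Re h * ux + Im h * uy)) (at w)"
    and "(v has_derivative (\<lambda>h. Re h * vx + Im h * vy)) (at w)"
    and "ux = vy" "uy = - vx"
  shows "((\<lambda>w. Complex (u w) (v w)) has_field_derivative Complex ux vx) (at w)"
proof -
  have "((\<lambda>w. of_real (u w) + \<i> * of_real (v w)) has_derivative
      (\<lambda>h. of_real (Re h * ux + Im h * uy) + \<i> * of_real (Re h * vx + Im h * vy))) (at w)"
    using assms(1,2) by (intro derivative_intros)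
  moreover have "(\<lambda>h. of_real (Re h * ux + Im h * uy) + \<i> * of_real (Re h * vx + Im h * vy))
      = (*) (Complex ux vx)"
    using assms(3,4) by (auto simp: complex_eq_iff algebra_simps)
  ultimately show ?thesis
    by (simp add: has_field_derivative_def Complex_eq)
qed

lemma harmonic_eq_Re_holomorphic:
  fixes F p q pxx pxy qx qy :: "complex \<Rightarrow> real"
  assumes "open U" "convex U"
    and F: "\<And>w. w \<in> U \<Longrightarrow> (F has_derivative (\<lambda>h. Re h * p w + Im h * q w)) (at w)"
    and p: "\<And>w. w \<in> U \<Longrightarrow> (p has_derivative (\<lambda>h. Re h * pxx w + Im h * pxy w)) (at w)"
    and q: "\<And>w. w \<in> U \<Longrightarrow> (q has_derivative (\<lambda>h. Re h * qx w + Im h * qy w)) (at w)"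
    and "continuous_on U pxy" "continuous_on U qx"
    and harmonic: "\<And>w. w \<in> U \<Longrightarrow> pxx w + qy w = 0"
  obtains H where "\<And>w. w \<in> U \<Longrightarrow> (H has_field_derivative Complex (p w) (- q w)) (at w)"
    and "\<And>w. w \<in> U \<Longrightarrow> F w = Re (H w)"
proof -
  have "((\<lambda>w. Complex (p w) (- q w)) has_field_derivative Complex (pxx w) (- qx w)) (at w)"
    if "w \<in> U" for w
  proof (rule Cauchy_Riemann_has_field_derivative)
    show "((\<lambda>w. - q w) has_derivative (\<lambda>h. Re h * - qx w + Im h * - qy w)) (at w)"
      using has_derivative_minus[OF q[OF that]] by simp
    show "pxx w = - qy w" "pxy w = - (- qx w)"
      using harmonic[OF that] mixed_partials_eq[OF assms(1) that F p q assms(6,7)] by auto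
  qed (use p that in auto)
  then have "(\<lambda>w. Complex (p w) (- q w)) holomorphic_on U"
    using \<open>open U\<close> holomorphic_on_open by blast
  then obtain H0 where "\<And>w. w \<in> U \<Longrightarrow> (H0 has_field_derivative Complex (p w) (- q w)) (at w within U)"
    using holomorphic_convex_primitive'[OF \<open>convex U\<close> \<open>open U\<close>] by blast
  then have H0: "(H0 has_field_derivative Complex (p w) (- q w)) (at w)" if "w \<in> U" for w
    using that \<open>open U\<close> at_within_open by metis
  have "((\<lambda>w. F w - Re (H0 w)) has_derivative (\<lambda>h. 0)) (at w within U)" if "w \<in> U" for w
  proof -
    have "((\<lambda>w. F w - Re (H0 w)) has_derivative
        (\<lambda>h. Re h * p w + Im h * q w - Re (Complex (p w) (- q w) * h))) (at w)"
      using H0[OF that] F[OF that] unfolding has_field_derivative_def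
      by (intro derivative_intros) auto
    moreover have "(\<lambda>h. Re h * p w + Im h * q w - Re (Complex (p w) (- q w) * h)) = (\<lambda>h. 0)"
      by (auto simp: fun_eq_iff)
    ultimately show ?thesis
      by (metis has_derivative_at_withinI)
  qed
  then obtain c where c: "\<And>w. w \<in> U \<Longrightarrow> F w - Re (H0 w) = c"
    using has_derivative_zero_constant[OF \<open>convex U\<close>, of "\<lambda>w. F w - Re (H0 w)"] by blast
  show thesis
  proof
    show "((\<lambda>w. H0 w + of_real c) has_field_derivative Complex (p w) (- q w)) (at w)" if "w \<in> U" for w
      using DERIV_add[OF H0[OF that] DERIV_const[of "of_real c"]] by simp
    show "F w = Re (H0 w + of_real c)" if "w \<in> U" for w
      using c[OF that] by simp
  qed
qed

lemma conformal_minimal_immersionE: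
  fixes f :: "complex \<Rightarrow> 'a::euclidean_space"
  assumes "conformal_minimal_immersion f U" "convex U"
  obtains fx fy where
    "\<And>w. w \<in> U \<Longrightarrow> (f has_derivative (\<lambda>h. Re h *\<^sub>R fx w + Im h *\<^sub>R fy w)) (at w)"
    "\<And>w. w \<in> U \<Longrightarrow> fx w \<bullet> fx w = fy w \<bullet> fy w"
    "\<And>w. w \<in> U \<Longrightarrow> fx w \<bullet> fy w = 0"
    "\<And>e. \<exists>H. \<forall>w\<in>U. (H has_field_derivative Complex (e \<bullet> fx w) (- (e \<bullet> fy w))) (at w)
                  \<and> e \<bullet> f w = Re (H w)"
proof -
  have "open U"
    using assms(1) by (simp add: conformal_minimal_immersion_def)
  from assms(1) obtain fx fy fxx fxy fyx fyy where
    A: "\<forall>w\<in>U. (f has_derivative (\<lambda>h. Re h *\<^sub>R fx w + Im h *\<^sub>R fy w)) (at w) \<and>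
         (fx has_derivative (\<lambda>h. Re h *\<^sub>R fxx w + Im h *\<^sub>R fxy w)) (at w) \<and>
         (fy has_derivative (\<lambda>h. Re h *\<^sub>R fyx w + Im h *\<^sub>R fyy w)) (at w) \<and>
         fxx w + fyy w = 0 \<and>
         inj (\<lambda>h. Re h *\<^sub>R fx w + Im h *\<^sub>R fy w) \<and>
         fx w \<bullet> fx w = fy w \<bullet> fy w \<and> fx w \<bullet> fy w = 0"
    and "continuous_on U fxy" "continuous_on U fyx"
    unfolding conformal_minimal_immersion_def by (elim conjE exE) (intro that)
  have df: "\<And>w. w \<in> U \<Longrightarrow> (f has_derivative (\<lambda>h. Re h *\<^sub>R fx w + Im h *\<^sub>R fy w)) (at w)"
    and dfx: "\<And>w. w \<in> U \<Longrightarrow> (fx has_derivative (\<lambda>h. Re h *\<^sub>R fxx w + Im h *\<^sub>R fxy w)) (at w)"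
    and dfy: "\<And>w. w \<in> U \<Longrightarrow> (fy has_derivative (\<lambda>h. Re h *\<^sub>R fyx w + Im h *\<^sub>R fyy w)) (at w)"
    and harmonic: "\<And>w. w \<in> U \<Longrightarrow> fxx w + fyy w = 0"
    and conformal: "\<And>w. w \<in> U \<Longrightarrow> fx w \<bullet> fx w = fy w \<bullet> fy w \<and> fx w \<bullet> fy w = 0"
    using A by simp_all
  have inner_derivative: "((\<lambda>w. e \<bullet> g w) has_derivative (\<lambda>h. Re h * (e \<bullet> gx w) + Im h * (e \<bullet> gy w))) (at w)"
    if "(g has_derivative (\<lambda>h. Re h *\<^sub>R gx w + Im h *\<^sub>R gy w)) (at w)" for e g gx gy w
    using has_derivative_inner_right[OF that, of e] by (simp add: inner_add_right)
  have "\<exists>H. \<forall>w\<in>U. (H has_field_derivative Complex (e \<bullet> fx w) (- (e \<bullet> fy w))) (at w)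
                  \<and> e \<bullet> f w = Re (H w)" for e
  proof -
    obtain H where "\<And>w. w \<in> U \<Longrightarrow> (H has_field_derivative Complex (e \<bullet> fx w) (- (e \<bullet> fy w))) (at w)"
      and "\<And>w. w \<in> U \<Longrightarrow> e \<bullet> f w = Re (H w)"
    proof (rule harmonic_eq_Re_holomorphic[OF \<open>open U\<close> \<open>convex U\<close>, where F = "\<lambda>w. e \<bullet> f w"
          and pxx = "\<lambda>w. e \<bullet> fxx w" and pxy = "\<lambda>w. e \<bullet> fxy w"
          and qx = "\<lambda>w. e \<bullet> fyx w" and qy = "\<lambda>w. e \<bullet> fyy w"])
      show "continuous_on U (\<lambda>w. e \<bullet> fxy w)" "continuous_on U (\<lambda>w. e \<bullet> fyx w)"
        using \<open>continuous_on U fxy\<close> \<open>continuous_on U fyx\<close> by (auto intro: continuous_intros)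
      show "e \<bullet> fxx w + e \<bullet> fyy w = 0" if "w \<in> U" for w
        using harmonic[OF that] by (simp flip: inner_add_right)
    qed (auto intro: inner_derivative df dfx dfy)
    then show ?thesis
      by blast
  qed
  with df conformal show thesis
    by (intro that[of fx fy]) auto
qed

lemma conformal_minimal_immersion_imp_continuous_on:
  "conformal_minimal_immersion f U \<Longrightarrow> continuous_on U f"
  unfolding conformal_minimal_immersion_def
  by (metis continuous_at_imp_continuous_on has_derivative_continuous)

section \<open>Circle averages of holomorphic functions\<close>

lemma has_contour_integral_circlepath_imp_has_integral:
  assumes "(g has_contour_integral I) (circlepath 0 r)"
  shows "((\<lambda>t. 2 * pi * \<i> * r * cis (2 * pi * t) * g (r * cis (2 * pi * t))) has_integral I) {0..1}"
proof -
  from assms have "((\<lambda>t. g (circlepath 0 r t) * vector_derivative (circlepath 0 r) (at t within {0..1}))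
      has_integral I) {0..1}"
    unfolding has_contour_integral_def .
  then show ?thesis
    by (rule has_integral_eq[rotated])
      (simp add: vector_derivative_circlepath01, simp add: circlepath cis_conv_exp mult_ac)
qed

lemma Re_mult_Re_cis:
  "Re x * Re (cnj u * cis \<theta>) = Re ((cnj u * (x * cis \<theta>) + u * (x / cis \<theta>)) / 2)"
proof -
  have "u * (x / cis \<theta>) = cnj (cnj u * cis \<theta> * cnj x)"
    by (simp add: cis_cnj divide_inverse mult_ac)
  moreover have "Re (cnj u * (x * cis \<theta>) + cnj (cnj u * cis \<theta> * cnj x)) = 2 * (Re x * Re (cnj u * cis \<theta>))"
    by (simp add: algebra_simps)
  ultimately show ?thesis
    by simp
qed

context
  fixes \<phi> :: "complex \<Rightarrow> complex" and r :: real
  assumes holo: "\<phi> holomorphic_on cball 0 r" and "0 < r"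
begin

private lemma cball_circlepath_facts:
  "path_image (circlepath 0 r) \<subseteq> cball 0 r" "continuous_on (cball 0 r) \<phi>"
  "\<phi> holomorphic_on ball 0 r" "(0::complex) \<in> ball 0 r"
  using holo \<open>0 < r\<close> by (auto intro: holomorphic_on_imp_continuous_on holomorphic_on_subset)

lemma circle_mean_holomorphic:
  "((\<lambda>t. \<phi> (r * cis (2 * pi * t))) has_integral \<phi> 0) {0..1}"
proof -
  have "((\<lambda>u. \<phi> u / (u - 0)) has_contour_integral 2 * of_real pi * \<i> * \<phi> 0) (circlepath 0 r)"
    using Cauchy_integral_circlepath_simple[OF holo, of 0] \<open>0 < r\<close> by simp
  from has_integral_mult_right[OF has_contour_integral_circlepath_imp_has_integral[OF this],
      of "1 / (2 * pi * \<i>)"]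
  show ?thesis
    using \<open>0 < r\<close> by simp
qed

lemma circle_mean_holomorphic_div_cis:
  "((\<lambda>t. \<phi> (r * cis (2 * pi * t)) / cis (2 * pi * t)) has_integral r * deriv \<phi> 0) {0..1}"
proof -
  have "((\<lambda>u. \<phi> u / (u - 0) ^ Suc 1) has_contour_integral (2 * pi * \<i>) / fact 1 * (deriv ^^ 1) \<phi> 0)
      (circlepath 0 r)"
    using Cauchy_has_contour_integral_higher_derivative_circlepath cball_circlepath_facts by blast
  from has_integral_mult_right[OF has_contour_integral_circlepath_imp_has_integral[OF this],
      of "r / (2 * pi * \<i>)"]
  show ?thesis
    using \<open>0 < r\<close> by (simp add: power2_eq_square field_simps)
qed

lemma circle_mean_holomorphic_mult_cis:
  "((\<lambda>t. \<phi> (r * cis (2 * pi * t)) * cis (2 * pi * t)) has_integral 0) {0..1}"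
proof -
  have "(\<phi> has_contour_integral 0) (circlepath 0 r)"
    using Cauchy_theorem_convex_simple[OF holo] cball_circlepath_facts by auto
  from has_integral_mult_right[OF has_contour_integral_circlepath_imp_has_integral[OF this],
      of "1 / (2 * pi * \<i> * r)"]
  show ?thesis
    using \<open>0 < r\<close> by (simp add: field_simps)
qed

lemma circle_mean_Re_holomorphic_mult_Re:
  "((\<lambda>t. Re (\<phi> (r * cis (2 * pi * t))) * Re (cnj u * cis (2 * pi * t)))
     has_integral r / 2 * Re (u * deriv \<phi> 0)) {0..1}"
proof -
  have "((\<lambda>t. (cnj u * (\<phi> (r * cis (2 * pi * t)) * cis (2 * pi * t))
        + u * (\<phi> (r * cis (2 * pi * t)) / cis (2 * pi * t))) / 2)
      has_integral (cnj u * 0 + u * (r * deriv \<phi> 0)) / 2) {0..1}"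
    by (intro has_integral_divide has_integral_add has_integral_mult_right
        circle_mean_holomorphic_mult_cis circle_mean_holomorphic_div_cis)
  then have "((\<lambda>t. Re (\<phi> (r * cis (2 * pi * t))) * Re (cnj u * cis (2 * pi * t)))
      has_integral Re ((cnj u * 0 + u * (r * deriv \<phi> 0)) / 2)) {0..1}"
    unfolding Re_mult_Re_cis by (rule has_integral_Re)
  then show ?thesis
    by (rule has_integral_eq_rhs) (simp add: algebra_simps)
qed

end

lemma has_integral_Re_mult_cis:
  "((\<lambda>t. Re (c * cis (2 * pi * t))) has_integral 0) {0..1}"
  using has_integral_Re[OF circle_mean_holomorphic_mult_cis[of "\<lambda>_. c" 1]] by simp

section \<open>A Schwarz--Pick lemma for pairs of harmonic functions\<close>

(* The vector (2 s + (1 + s^2) C, (1 - s^2) S) has length 1 + s^2 + 2 s C, so this is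
   Cauchy--Schwarz against (X, Y). *)
lemma disc_pointwise_ineq:
  fixes s C S X Y :: real
  assumes "C\<^sup>2 + S\<^sup>2 = 1" "X\<^sup>2 + Y\<^sup>2 \<le> 1"
  shows "(2 * s + (1 + s\<^sup>2) * C) * X + (1 - s\<^sup>2) * S * Y \<le> 1 + s\<^sup>2 + 2 * s * C"
proof -
  define \<alpha> \<beta> K where "\<alpha> = 2 * s + (1 + s\<^sup>2) * C" and "\<beta> = (1 - s\<^sup>2) * S"
    and "K = 1 + s\<^sup>2 + 2 * s * C"
  have S: "S\<^sup>2 = 1 - C\<^sup>2"
    using assms(1) by simp
  then have "\<beta>\<^sup>2 = (1 - s\<^sup>2)\<^sup>2 * (1 - C\<^sup>2)"
    by (simp add: \<beta>_def power_mult_distrib)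
  then have "\<alpha>\<^sup>2 + \<beta>\<^sup>2 = K\<^sup>2"
    by (simp add: \<alpha>_def K_def power2_eq_square algebra_simps)
  have "K = (1 + s * C)\<^sup>2 + s\<^sup>2 * S\<^sup>2"
    unfolding K_def S by (simp add: power2_eq_square algebra_simps)
  then have "0 \<le> K"
    by simp
  have "(\<alpha> * X + \<beta> * Y)\<^sup>2 \<le> (\<alpha>\<^sup>2 + \<beta>\<^sup>2) * (X\<^sup>2 + Y\<^sup>2)"
    using zero_le_power2[of "\<alpha> * Y - \<beta> * X"] by (simp add: power2_eq_square algebra_simps)
  also have "\<dots> \<le> K\<^sup>2"
    using \<open>\<alpha>\<^sup>2 + \<beta>\<^sup>2 = K\<^sup>2\<close> assms(2) by (simp add: mult_left_le)
  finally have "\<alpha> * X + \<beta> * Y \<le> K"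
    using \<open>0 \<le> K\<close> power2_le_imp_le by blast
  then show ?thesis
    by (simp add: \<alpha>_def \<beta>_def K_def mult.assoc)
qed

lemma holomorphic_pair_circle_ineq:
  fixes \<phi>e \<phi>d :: "complex \<Rightarrow> complex"
  assumes holo: "\<phi>e holomorphic_on cball 0 r" "\<phi>d holomorphic_on cball 0 r"
    and "0 < r" "\<phi>e 0 = 0" "norm u = 1"
    and bound: "\<And>w. norm w = r \<Longrightarrow> (s + Re (\<phi>e w))\<^sup>2 + (Re (\<phi>d w))\<^sup>2 \<le> 1"
  shows "r * ((1 + s\<^sup>2) * Re (u * deriv \<phi>e 0) + (1 - s\<^sup>2) * Re (\<i> * u * deriv \<phi>d 0))
    \<le> 2 * (1 - s\<^sup>2)"
proof -
  define A B where "A = Re (u * deriv \<phi>e 0)" and "B = Re (\<i> * u * deriv \<phi>d 0)"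
  define w where "w t = r * cis (2 * pi * t)" for t
  define C S where "C t = Re (cnj u * cis (2 * pi * t))" and "S t = Re (cnj (\<i> * u) * cis (2 * pi * t))"
    for t
  have CS: "(C t)\<^sup>2 + (S t)\<^sup>2 = 1" for t
  proof -
    have "(C t)\<^sup>2 + (S t)\<^sup>2 = (norm (cnj u * cis (2 * pi * t)))\<^sup>2"
      unfolding C_def S_def cmod_power2 by simp
    then show ?thesis
      using \<open>norm u = 1\<close> by (simp add: norm_mult)
  qed
  have norm_w: "norm (w t) = r" for t
    using \<open>0 < r\<close> by (simp add: w_def norm_mult)
  (* disc_pointwise_ineq at X = s + Re (\<phi>e w), Y = Re (\<phi>d w), multiplied out so that
     every term has a known circle average *)
  have pointwise: "2 * s * s + 2 * s * Re (\<phi>e (w t)) + (1 + s\<^sup>2) * s * C t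
      + (1 + s\<^sup>2) * (Re (\<phi>e (w t)) * C t) + (1 - s\<^sup>2) * (Re (\<phi>d (w t)) * S t)
      \<le> (1 + s\<^sup>2) + 2 * s * C t" for t
    using disc_pointwise_ineq[OF CS bound[OF norm_w]] by (simp add: algebra_simps power2_eq_square)
  have "((\<lambda>t. Re (\<phi>e (w t))) has_integral 0) {0..1}"
    using has_integral_Re[OF circle_mean_holomorphic[OF holo(1) \<open>0 < r\<close>]] \<open>\<phi>e 0 = 0\<close>
    by (simp add: w_def)
  moreover have "((\<lambda>t. Re (\<phi>e (w t)) * C t) has_integral r / 2 * A) {0..1}"
    unfolding w_def C_def A_def by (rule circle_mean_Re_holomorphic_mult_Re[OF holo(1) \<open>0 < r\<close>])
  moreover have "((\<lambda>t. Re (\<phi>d (w t)) * S t) has_integral r / 2 * B) {0..1}"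
    unfolding w_def S_def B_def by (rule circle_mean_Re_holomorphic_mult_Re[OF holo(2) \<open>0 < r\<close>])
  moreover have "(C has_integral 0) {0..1}"
    unfolding C_def by (rule has_integral_Re_mult_cis)
  moreover have "((\<lambda>t. c) has_integral c) {0..1::real}" for c
    using has_integral_const_real[of c 0 1] by simp
  ultimately have "2 * s * s + 2 * s * 0 + (1 + s\<^sup>2) * s * 0 + (1 + s\<^sup>2) * (r / 2 * A)
      + (1 - s\<^sup>2) * (r / 2 * B) \<le> (1 + s\<^sup>2) + 2 * s * 0"
    by (intro has_integral_le[OF _ _ pointwise] has_integral_add has_integral_mult_right)
  then show ?thesis
    by (simp add: A_def B_def power2_eq_square field_simps)
qed

lemma holomorphic_pair_deriv_bound:
  fixes \<phi>e \<phi>d :: "complex \<Rightarrow> complex"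
  assumes "\<phi>e holomorphic_on ball 0 1" "\<phi>d holomorphic_on ball 0 1" "\<phi>e 0 = 0" "norm u = 1"
    and "\<And>w. w \<in> ball 0 1 \<Longrightarrow> (s + Re (\<phi>e w))\<^sup>2 + (Re (\<phi>d w))\<^sup>2 \<le> 1"
  shows "(1 + s\<^sup>2) * Re (u * deriv \<phi>e 0) + (1 - s\<^sup>2) * Re (\<i> * u * deriv \<phi>d 0) \<le> 2 * (1 - s\<^sup>2)"
proof (rule field_le_mult_one_interval)
  fix r :: real
  assume "0 < r" "r < 1"
  then have "cball 0 r \<subseteq> ball 0 1"
    by auto
  with \<open>0 < r\<close> assms show "r * ((1 + s\<^sup>2) * Re (u * deriv \<phi>e 0) + (1 - s\<^sup>2) * Re (\<i> * u * deriv \<phi>d 0))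
      \<le> 2 * (1 - s\<^sup>2)"
    by (intro holomorphic_pair_circle_ineq) (auto intro: holomorphic_on_subset)
qed

lemma disc_automorphism_to_point:
  fixes z :: complex
  assumes "norm z < 1"
  obtains M where "M holomorphic_on ball 0 1" "M ` ball 0 1 \<subseteq> ball 0 1" "M 0 = z"
    "(M has_field_derivative of_real (1 - (norm z)\<^sup>2)) (at 0)"
proof
  let ?M = "Moebius_function 0 (- z)"
  show "?M holomorphic_on ball 0 1"
    using assms by (intro Moebius_function_holomorphic) simp
  show "?M ` ball 0 1 \<subseteq> ball 0 1"
    using assms Moebius_function_norm_lt_1 by auto
  show "?M 0 = z"
    by (simp add: Moebius_function_of_zero)
  have "((\<lambda>w. (w + z) / (1 + cnj z * w)) has_field_derivative 1 - z * cnj z) (at 0)"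
    by (auto intro!: derivative_eq_intros)
  moreover have "1 - z * cnj z = of_real (1 - (norm z)\<^sup>2)"
    by (simp only: of_real_diff of_real_1 complex_norm_square)
  ultimately show "(?M has_field_derivative of_real (1 - (norm z)\<^sup>2)) (at 0)"
    by (simp add: Moebius_function_simple[abs_def])
qed

lemma holomorphic_pair_Schwarz_Pick:
  fixes He Hd :: "complex \<Rightarrow> complex"
  assumes holo: "He holomorphic_on ball 0 1" "Hd holomorphic_on ball 0 1"
    and "z \<in> ball 0 1" "Re (Hd z) = 0" "norm u = 1"
    and bound: "\<And>w. w \<in> ball 0 1 \<Longrightarrow> (Re (He w))\<^sup>2 + (Re (Hd w))\<^sup>2 \<le> 1"
  shows "(1 - (norm z)\<^sup>2) * ((1 + (Re (He z))\<^sup>2) * Re (u * deriv He z)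
      + (1 - (Re (He z))\<^sup>2) * Re (\<i> * u * deriv Hd z)) \<le> 2 * (1 - (Re (He z))\<^sup>2)"
proof -
  define s k where "s = Re (He z)" and "k = 1 - (norm z)\<^sup>2"
  obtain M where M: "M holomorphic_on ball 0 1" "M ` ball 0 1 \<subseteq> ball 0 1" "M 0 = z"
    and dM: "(M has_field_derivative of_real k) (at 0)"
    using disc_automorphism_to_point \<open>z \<in> ball 0 1\<close> unfolding k_def by auto
  define \<phi>e \<phi>d where "\<phi>e w = He (M w) - He z" and "\<phi>d w = Hd (M w) - Hd z" for w
  have holo_comp: "(\<lambda>w. H (M w) - H z) holomorphic_on ball 0 1"
    if "H holomorphic_on ball 0 1" for H
    using holomorphic_on_compose_gen[OF M(1) that M(2)] by (auto intro: holomorphic_intros simp: o_def)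
  have deriv_comp: "deriv (\<lambda>w. H (M w) - H z) 0 = deriv H z * k"
    if "H holomorphic_on ball 0 1" for H
  proof -
    have "(H has_field_derivative deriv H (M 0)) (at (M 0))"
      using holomorphic_derivI[OF that] \<open>z \<in> ball 0 1\<close> \<open>M 0 = z\<close> by auto
    from DERIV_diff[OF DERIV_chain2[OF this dM] DERIV_const]
    show ?thesis
      using \<open>M 0 = z\<close> by (simp add: DERIV_imp_deriv)
  qed
  have "\<phi>e holomorphic_on ball 0 1" "\<phi>d holomorphic_on ball 0 1"
    unfolding \<phi>e_def[abs_def] \<phi>d_def[abs_def] using holo by (auto intro: holo_comp)
  moreover have "deriv \<phi>e 0 = deriv He z * k" "deriv \<phi>d 0 = deriv Hd z * k"
    unfolding \<phi>e_def[abs_def] \<phi>d_def[abs_def] using holo by (auto intro: deriv_comp)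
  moreover have "(s + Re (\<phi>e w))\<^sup>2 + (Re (\<phi>d w))\<^sup>2 \<le> 1" if "w \<in> ball 0 1" for w
  proof -
    have "M w \<in> ball 0 1"
      using M(2) that by blast
    then show ?thesis
      using bound \<open>Re (Hd z) = 0\<close> by (simp add: \<phi>e_def \<phi>d_def s_def)
  qed
  ultimately have "(1 + s\<^sup>2) * Re (u * (deriv He z * k)) + (1 - s\<^sup>2) * Re (\<i> * u * (deriv Hd z * k))
      \<le> 2 * (1 - s\<^sup>2)"
    using holomorphic_pair_deriv_bound[of \<phi>e \<phi>d u s] \<open>M 0 = z\<close> \<open>norm u = 1\<close>
    by (simp add: \<phi>e_def)
  then show ?thesis
    by (simp add: s_def k_def algebra_simps)
qed

section \<open>The Schwarz--Pick inequality for conformal minimal immersions\<close>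

lemma orthogonal_equal_norm_inner_sq_le:
  fixes e D D' :: "'a::real_inner"
  assumes "norm e = 1" "norm D = norm D'" "D \<bullet> D' = 0"
  shows "(e \<bullet> D)\<^sup>2 + (e \<bullet> D')\<^sup>2 \<le> (norm D)\<^sup>2"
proof -
  define a x where "a = (e \<bullet> D)\<^sup>2 + (e \<bullet> D')\<^sup>2" and "x = (e \<bullet> D) *\<^sub>R D + (e \<bullet> D') *\<^sub>R D'"
  have "e \<bullet> x = a"
    by (simp add: x_def a_def inner_add_right power2_eq_square)
  have "D' \<bullet> D' = D \<bullet> D"
    using assms(2) by (metis power2_norm_eq_inner)
  then have "(norm x)\<^sup>2 = a * (norm D)\<^sup>2"
    using assms(3) unfolding power2_norm_eq_inner
    by (simp add: x_def a_def inner_add_left inner_add_right inner_commute power2_eq_square algebra_simps)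
  have "a\<^sup>2 \<le> (norm e)\<^sup>2 * (norm x)\<^sup>2"
    using Cauchy_Schwarz_ineq[of e x] \<open>e \<bullet> x = a\<close> by (simp add: power2_norm_eq_inner)
  then have "a\<^sup>2 \<le> a * (norm D)\<^sup>2"
    using \<open>norm e = 1\<close> \<open>(norm x)\<^sup>2 = a * (norm D)\<^sup>2\<close> by simp
  moreover have "a \<ge> 0"
    by (simp add: a_def)
  ultimately show ?thesis
    unfolding a_def[symmetric] by (cases "a = 0") (auto simp: power2_eq_square)
qed

lemma Bessel_inequality_two:
  fixes e d x :: "'a::real_inner"
  assumes "norm e = 1" "d \<bullet> e = 0" "norm d \<le> 1"
  shows "(e \<bullet> x)\<^sup>2 + (d \<bullet> x)\<^sup>2 \<le> (norm x)\<^sup>2"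
proof -
  define y where "y = x - (e \<bullet> x) *\<^sub>R e"
  have "e \<bullet> e = 1"
    using \<open>norm e = 1\<close> by (simp add: norm_eq_1)
  then have "(norm y)\<^sup>2 = (norm x)\<^sup>2 - (e \<bullet> x)\<^sup>2"
    unfolding power2_norm_eq_inner y_def inner_diff_left inner_diff_right
    by (simp add: inner_commute[of x e] power2_eq_square)
  moreover have "d \<bullet> x = d \<bullet> y"
    using \<open>d \<bullet> e = 0\<close> by (simp add: y_def inner_diff_right)
  moreover have "(d \<bullet> y)\<^sup>2 \<le> (norm y)\<^sup>2"
  proof -
    have "(d \<bullet> y)\<^sup>2 \<le> (norm d)\<^sup>2 * (norm y)\<^sup>2"
      using Cauchy_Schwarz_ineq[of d y] by (simp add: power2_norm_eq_inner)
    also have "\<dots> \<le> (norm y)\<^sup>2"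
      using \<open>norm d \<le> 1\<close> by (simp add: mult_left_le_one_le power_le_one)
    finally show ?thesis .
  qed
  ultimately show ?thesis
    by simp
qed

lemma exists_orthogonal_dominating:
  fixes e D D' :: "'a::real_inner"
  assumes "norm e = 1" "norm D = norm D'" "D \<bullet> D' = 0"
  obtains d where "d \<bullet> e = 0" "norm d \<le> 1" "e \<bullet> D \<le> d \<bullet> D'"
proof -
  define y where "y = D' - (e \<bullet> D') *\<^sub>R e"
  have "e \<bullet> e = 1"
    using \<open>norm e = 1\<close> by (simp add: norm_eq_1)
  then have "y \<bullet> e = 0" and y_D': "y \<bullet> D' = (norm y)\<^sup>2"
    and norm_y: "(norm y)\<^sup>2 = (norm D')\<^sup>2 - (e \<bullet> D')\<^sup>2"
    unfolding power2_norm_eq_inner y_def inner_diff_left inner_diff_right inner_scaleR_left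
    by (simp_all add: inner_commute[of D' e] power2_eq_square)
  have "(e \<bullet> D)\<^sup>2 \<le> (norm y)\<^sup>2"
    using orthogonal_equal_norm_inner_sq_le[OF assms] norm_y \<open>norm D = norm D'\<close> by simp
  then have "e \<bullet> D \<le> norm y"
    using abs_le_square_iff[of "e \<bullet> D" "norm y"] by simp
  show thesis
  proof (cases "y = 0")
    case True
    then show thesis
      using \<open>e \<bullet> D \<le> norm y\<close> by (intro that[of 0]) auto
  next
    case False
    then show thesis
      using \<open>y \<bullet> e = 0\<close> y_D' \<open>e \<bullet> D \<le> norm y\<close>
      by (intro that[of "y /\<^sub>R norm y"]) (auto simp: power2_eq_square field_simps)
  qed
qed

lemma conformal_linear_map_rotation:
  fixes a b :: "'a::real_inner"
  assumes "a \<bullet> a = b \<bullet> b" "a \<bullet> b = 0"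
  shows "norm (Re v *\<^sub>R a + Im v *\<^sub>R b) = norm (Re (\<i> * v) *\<^sub>R a + Im (\<i> * v) *\<^sub>R b)"
    and "(Re v *\<^sub>R a + Im v *\<^sub>R b) \<bullet> (Re (\<i> * v) *\<^sub>R a + Im (\<i> * v) *\<^sub>R b) = 0"
  using assms
  by (simp_all add: norm_eq_sqrt_inner inner_add_left inner_add_right inner_commute[of b a] algebra_simps)

lemma Re_holomorphic_components_pair_bound:
  fixes f fx fy :: "complex \<Rightarrow> 'a::real_inner"
  assumes H: "\<And>c. \<exists>H. \<forall>w\<in>ball 0 1. (H has_field_derivative Complex (c \<bullet> fx w) (- (c \<bullet> fy w))) (at w)
                  \<and> c \<bullet> f w = Re (H w)"
    and into: "f ` ball 0 1 \<subseteq> ball 0 1" and "z \<in> ball 0 1" "norm u = 1"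
    and e: "norm e = 1" "f z = s *\<^sub>R e" and d: "d \<bullet> e = 0" "norm d \<le> 1"
  shows "(1 - (norm z)\<^sup>2) * ((1 + s\<^sup>2) * (e \<bullet> (Re u *\<^sub>R fx z + Im u *\<^sub>R fy z))
      + (1 - s\<^sup>2) * (d \<bullet> (Re (\<i> * u) *\<^sub>R fx z + Im (\<i> * u) *\<^sub>R fy z))) \<le> 2 * (1 - s\<^sup>2)"
proof -
  obtain He Hd where
    He: "\<And>w. w \<in> ball 0 1 \<Longrightarrow> (He has_field_derivative Complex (e \<bullet> fx w) (- (e \<bullet> fy w))) (at w)"
      "\<And>w. w \<in> ball 0 1 \<Longrightarrow> e \<bullet> f w = Re (He w)"
    and Hd: "\<And>w. w \<in> ball 0 1 \<Longrightarrow> (Hd has_field_derivative Complex (d \<bullet> fx w) (- (d \<bullet> fy w))) (at w)"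
      "\<And>w. w \<in> ball 0 1 \<Longrightarrow> d \<bullet> f w = Re (Hd w)"
    using H[of e] H[of d] by metis
  have holo: "He holomorphic_on ball 0 1" "Hd holomorphic_on ball 0 1"
    unfolding holomorphic_on_open[OF open_ball] using He(1) Hd(1) by blast+
  have Re_deriv: "Re (v * deriv H z) = c \<bullet> (Re v *\<^sub>R fx z + Im v *\<^sub>R fy z)"
    if "(H has_field_derivative Complex (c \<bullet> fx z) (- (c \<bullet> fy z))) (at z)" for H c v
    using DERIV_imp_deriv[OF that] by (simp add: inner_add_right)
  have bound: "(Re (He w))\<^sup>2 + (Re (Hd w))\<^sup>2 \<le> 1" if "w \<in> ball 0 1" for w
  proof -
    have "(e \<bullet> f w)\<^sup>2 + (d \<bullet> f w)\<^sup>2 \<le> (norm (f w))\<^sup>2"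
      using Bessel_inequality_two[OF e(1) d] .
    also have "\<dots> \<le> 1"
      using into that by (force simp: abs_square_le_1)
    finally show ?thesis
      using He(2) Hd(2) that by simp
  qed
  have "Re (He z) = s" "Re (Hd z) = 0"
    using He(2)[OF \<open>z \<in> ball 0 1\<close>] Hd(2)[OF \<open>z \<in> ball 0 1\<close>] e d
    by (simp_all add: norm_eq_1 inner_commute)
  then show ?thesis
    using holomorphic_pair_Schwarz_Pick[OF holo \<open>z \<in> ball 0 1\<close> _ \<open>norm u = 1\<close> bound]
      Re_deriv[OF He(1)[OF \<open>z \<in> ball 0 1\<close>], of u] Re_deriv[OF Hd(1)[OF \<open>z \<in> ball 0 1\<close>], of "\<i> * u"]
    by (simp only: mult.assoc)
qed

lemma conformal_minimal_immersion_Schwarz_Pick_unit: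
  fixes f :: "complex \<Rightarrow> 'a::euclidean_space"
  assumes cmi: "conformal_minimal_immersion f (ball 0 1)" and into: "f ` ball 0 1 \<subseteq> ball 0 1"
    and z: "z \<in> ball 0 1" and f': "(f has_derivative f') (at z)" and u: "norm u = 1"
  shows "f z \<bullet> f' u * (1 - (norm z)\<^sup>2) \<le> norm (f z) * (1 - (norm (f z))\<^sup>2)"
proof -
  obtain fx fy where
    df: "\<And>w. w \<in> ball 0 1 \<Longrightarrow> (f has_derivative (\<lambda>h. Re h *\<^sub>R fx w + Im h *\<^sub>R fy w)) (at w)"
    and conformal: "\<And>w. w \<in> ball 0 1 \<Longrightarrow> fx w \<bullet> fx w = fy w \<bullet> fy w"
      "\<And>w. w \<in> ball 0 1 \<Longrightarrow> fx w \<bullet> fy w = 0"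
    and H: "\<And>c. \<exists>H. \<forall>w\<in>ball 0 1. (H has_field_derivative Complex (c \<bullet> fx w) (- (c \<bullet> fy w))) (at w)
                  \<and> c \<bullet> f w = Re (H w)"
    by (rule conformal_minimal_immersionE[OF cmi convex_ball]) (rule that)
  define L where "L v = Re v *\<^sub>R fx z + Im v *\<^sub>R fy z" for v
  have "f' = L"
    unfolding L_def by (rule has_derivative_unique[OF f' df[OF z]])
  define s k where "s = norm (f z)" and "k = 1 - (norm z)\<^sup>2"
  have "norm (f z) < 1"
    using into z by force
  then have "0 \<le> k" "0 \<le> 1 - s\<^sup>2"
    using z by (auto simp: s_def k_def abs_square_le_1)
  show ?thesis
  proof (cases "s = 0")
    case True
    then show ?thesis
      by (simp add: s_def)
  next
    case False
    define e where "e = f z /\<^sub>R s"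
    have e: "norm e = 1" "f z = s *\<^sub>R e"
      using False by (auto simp: e_def s_def)
    obtain d where d: "d \<bullet> e = 0" "norm d \<le> 1" "e \<bullet> L u \<le> d \<bullet> L (\<i> * u)"
      using exists_orthogonal_dominating[OF \<open>norm e = 1\<close> conformal_linear_map_rotation[OF conformal[OF z]]]
      unfolding L_def by blast
    have "2 * (k * (e \<bullet> L u)) = k * ((1 + s\<^sup>2) * (e \<bullet> L u) + (1 - s\<^sup>2) * (e \<bullet> L u))"
      by (simp add: algebra_simps)
    also have "\<dots> \<le> k * ((1 + s\<^sup>2) * (e \<bullet> L u) + (1 - s\<^sup>2) * (d \<bullet> L (\<i> * u)))"
      using d(3) \<open>0 \<le> k\<close> \<open>0 \<le> 1 - s\<^sup>2\<close> by (intro mult_left_mono add_left_mono) auto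
    also have "\<dots> \<le> 2 * (1 - s\<^sup>2)"
      using Re_holomorphic_components_pair_bound[OF H into z u e d(1,2)] unfolding L_def k_def .
    finally have "k * (e \<bullet> L u) \<le> 1 - s\<^sup>2"
      by simp
    have "f z \<bullet> f' u * (1 - (norm z)\<^sup>2) = s * (k * (e \<bullet> L u))"
      by (simp add: \<open>f' = L\<close> e(2) k_def)
    also have "\<dots> \<le> s * (1 - s\<^sup>2)"
      using \<open>k * (e \<bullet> L u) \<le> 1 - s\<^sup>2\<close> by (simp add: s_def mult_left_mono)
    finally show ?thesis
      by (simp add: s_def)
  qed
qed

lemma conformal_minimal_immersion_Schwarz_Pick:
  fixes f :: "complex \<Rightarrow> 'a::euclidean_space"
  assumes "conformal_minimal_immersion f (ball 0 1)" "f ` ball 0 1 \<subseteq> ball 0 1"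
    and "z \<in> ball 0 1" and f': "(f has_derivative f') (at z)"
  shows "f z \<bullet> f' v * (1 - (norm z)\<^sup>2) \<le> norm v * (norm (f z) * (1 - (norm (f z))\<^sup>2))"
proof (cases "v = 0")
  case True
  then show ?thesis
    using has_derivative_linear[OF f'] by (simp add: linear_0)
next
  case False
  define u where "u = v / of_real (norm v)"
  have "f' v = norm v *\<^sub>R f' u"
    using linear_scale[OF has_derivative_linear[OF f'], of "norm v" u] False
    by (simp add: u_def scaleR_conv_of_real)
  moreover have "norm u = 1"
    using False by (simp add: u_def norm_divide)
  ultimately show ?thesis
    using conformal_minimal_immersion_Schwarz_Pick_unit[OF assms, of u] mult_left_mono
    by (fastforce simp: mult.assoc)
qed

lemma conformal_minimal_immersion_norm_ray_deriv:
  fixes f :: "complex \<Rightarrow> 'a::euclidean_space"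
  assumes cmi: "conformal_minimal_immersion f (ball 0 1)" and into: "f ` ball 0 1 \<subseteq> ball 0 1"
    and z: "of_real t * a \<in> ball 0 1" and nonzero: "f (of_real t * a) \<noteq> 0"
  shows "\<exists>D. ((\<lambda>t. norm (f (of_real t * a))) has_real_derivative D) (at t) \<and>
    D * (1 - (t * norm a)\<^sup>2) \<le> norm a * (1 - (norm (f (of_real t * a)))\<^sup>2)"
proof -
  define z where "z = of_real t * a"
  obtain f' where f': "(f has_derivative f') (at z)"
    using cmi z unfolding conformal_minimal_immersion_def z_def by blast
  have "((\<lambda>t. f (of_real t * a)) has_derivative (\<lambda>h. h *\<^sub>R f' a)) (at t)"
    using has_vector_derivative_along_line[of f f' 0 t a] f'
    by (simp add: z_def has_vector_derivative_def)
  from has_derivative_compose[OF this has_derivative_norm[OF nonzero]]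
  have "((\<lambda>t. norm (f (of_real t * a))) has_real_derivative f' a \<bullet> sgn (f z)) (at t)"
    by (simp add: has_field_derivative_def z_def o_def mult_commute_abs)
  moreover have "(f' a \<bullet> sgn (f z)) * (1 - (t * norm a)\<^sup>2) \<le> norm a * (1 - (norm (f z))\<^sup>2)"
  proof -
    have "(t * norm a)\<^sup>2 = (norm z)\<^sup>2"
      by (simp add: z_def norm_mult power_mult_distrib)
    then have "(f' a \<bullet> sgn (f z)) * (1 - (t * norm a)\<^sup>2) = f z \<bullet> f' a * (1 - (norm z)\<^sup>2) / norm (f z)"
      by (simp add: sgn_div_norm inner_commute divide_inverse mult_ac)
    also have "\<dots> \<le> norm a * (norm (f z) * (1 - (norm (f z))\<^sup>2)) / norm (f z)"
      using conformal_minimal_immersion_Schwarz_Pick[OF cmi into z[folded z_def] f']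
      by (intro divide_right_mono) simp_all
    also have "\<dots> = norm a * (1 - (norm (f z))\<^sup>2)"
      using nonzero by (simp add: z_def)
    finally show ?thesis .
  qed
  ultimately show ?thesis
    by (auto simp: z_def)
qed

section \<open>Integration along a ray\<close>

lemma tanh_artanh_real:
  fixes x :: real
  assumes "\<bar>x\<bar> < 1"
  shows "tanh (artanh x) = x"
proof -
  have "0 < 1 + x" "0 < 1 - x"
    using assms by auto
  then have "- 2 * artanh x = ln ((1 - x) / (1 + x))"
    by (simp add: artanh_def ln_div)
  then have exp_artanh: "exp (- 2 * artanh x) = (1 - x) / (1 + x)"
    using \<open>0 < 1 + x\<close> \<open>0 < 1 - x\<close> by simp
  show ?thesis
    using \<open>0 < 1 + x\<close> unfolding tanh_real_altdef exp_artanh by (simp add: field_simps)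
qed

lemma le_add_div_of_artanh_le:
  fixes x y z :: real
  assumes "\<bar>x\<bar> < 1" "\<bar>y\<bar> < 1" "\<bar>z\<bar> < 1" "artanh x \<le> artanh y + artanh z"
  shows "x \<le> (y + z) / (1 + y * z)"
proof -
  have "x = tanh (artanh x)"
    using assms(1) by (simp add: tanh_artanh_real)
  also have "\<dots> \<le> tanh (artanh y + artanh z)"
    using assms(4) by simp
  also have "\<dots> = (y + z) / (1 + y * z)"
    using assms(2,3) by (simp add: tanh_add tanh_artanh_real)
  finally show ?thesis .
qed

lemma artanh_diff_antimono:
  fixes \<rho> :: "real \<Rightarrow> real"
  assumes "0 \<le> A" "A < 1" "0 \<le> t0" "t0 \<le> 1" and cont: "continuous_on {t0..1} \<rho>"
    and range: "\<And>t. t \<in> {t0..1} \<Longrightarrow> \<bar>\<rho> t\<bar> < 1"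
    and deriv: "\<And>t. t0 < t \<Longrightarrow> t < 1 \<Longrightarrow>
      \<exists>D. (\<rho> has_real_derivative D) (at t) \<and> D * (1 - (t * A)\<^sup>2) \<le> A * (1 - (\<rho> t)\<^sup>2)"
  shows "artanh (\<rho> 1) - artanh A \<le> artanh (\<rho> t0) - artanh (t0 * A)"
proof -
  define k where "k t = artanh (\<rho> t) - artanh (t * A)" for t
  have tA: "\<bar>t * A\<bar> < 1" if "t \<in> {t0..1}" for t
    using that assms(1-3) mult_left_le_one_le[of A t] by (simp add: abs_mult)
  have "continuous_on {t0..1} k"
    unfolding k_def using range tA
    by (intro continuous_intros cont) (auto simp: abs_less_iff)
  have "k 1 \<le> k t0"
  proof (rule DERIV_nonpos_imp_decreasing_open[OF \<open>t0 \<le> 1\<close> _ \<open>continuous_on {t0..1} k\<close>])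
    fix t
    assume t: "t0 < t" "t < 1"
    then have "t \<in> {t0..1}"
      by simp
    obtain D where D: "(\<rho> has_real_derivative D) (at t)" "D * (1 - (t * A)\<^sup>2) \<le> A * (1 - (\<rho> t)\<^sup>2)"
      using deriv t by blast
    have pos: "0 < 1 - (\<rho> t)\<^sup>2" "0 < 1 - (t * A)\<^sup>2"
      using range[OF \<open>t \<in> {t0..1}\<close>] tA[OF \<open>t \<in> {t0..1}\<close>] abs_square_less_1 by auto
    have "((\<lambda>t. artanh (\<rho> t)) has_real_derivative 1 / (1 - (\<rho> t)\<^sup>2) * D) (at t)"
      using DERIV_chain2[OF artanh_real_has_field_derivative D(1)] range[OF \<open>t \<in> {t0..1}\<close>] by simp
    moreover have "((\<lambda>t. artanh (t * A)) has_real_derivative 1 / (1 - (t * A)\<^sup>2) * A) (at t)"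
      using tA[OF \<open>t \<in> {t0..1}\<close>]
      by (intro DERIV_chain2[where g = "\<lambda>t. t * A", OF artanh_real_has_field_derivative])
        (auto intro!: derivative_eq_intros)
    ultimately have "(k has_real_derivative 1 / (1 - (\<rho> t)\<^sup>2) * D - 1 / (1 - (t * A)\<^sup>2) * A) (at t)"
      unfolding k_def by (rule DERIV_diff)
    moreover have "1 / (1 - (\<rho> t)\<^sup>2) * D \<le> 1 / (1 - (t * A)\<^sup>2) * A"
      using D(2) pos by (simp add: field_simps)
    ultimately show "\<exists>y. (k has_real_derivative y) (at t) \<and> y \<le> 0"
      by auto
  qed
  then show ?thesis
    by (simp add: k_def)
qed

lemma artanh_growth_bound:
  fixes \<rho> :: "real \<Rightarrow> real"
  assumes "0 \<le> A" "A < 1" and cont: "continuous_on {0..1} \<rho>"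
    and range: "\<And>t. t \<in> {0..1} \<Longrightarrow> 0 \<le> \<rho> t \<and> \<rho> t < 1"
    and "\<And>t. 0 < t \<Longrightarrow> t < 1 \<Longrightarrow> \<rho> t \<noteq> 0 \<Longrightarrow>
      \<exists>D. (\<rho> has_real_derivative D) (at t) \<and> D * (1 - (t * A)\<^sup>2) \<le> A * (1 - (\<rho> t)\<^sup>2)"
  shows "artanh (\<rho> 1) \<le> artanh A + artanh (\<rho> 0)"
proof -
  (* t0 is the last zero of \<rho> (or 0); the derivative bound holds on all of ]t0, 1[. *)
  define T where "T = {t \<in> {0..1}. \<rho> t = 0} \<union> {0}"
  define t0 where "t0 = Sup T"
  have "closed T"
    unfolding T_def by (intro closed_Un continuous_closed_preimage_constant cont) auto
  moreover have "bdd_above T"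
    unfolding T_def by (rule bdd_aboveI[of _ 1]) auto
  ultimately have "t0 \<in> T"
    unfolding t0_def by (intro closed_contains_Sup) (auto simp: T_def)
  then have "0 \<le> t0" "t0 \<le> 1"
    by (auto simp: T_def)
  have "\<rho> t \<noteq> 0" if "t0 < t" "t \<le> 1" for t
    using cSup_upper[OF _ \<open>bdd_above T\<close>, of t] that \<open>0 \<le> t0\<close> by (auto simp: T_def t0_def)
  then have "artanh (\<rho> 1) - artanh A \<le> artanh (\<rho> t0) - artanh (t0 * A)"
    using assms \<open>0 \<le> t0\<close> \<open>t0 \<le> 1\<close>
    by (intro artanh_diff_antimono continuous_on_subset[OF cont]) force+
  moreover have "artanh (\<rho> t0) - artanh (t0 * A) \<le> artanh (\<rho> 0)"
  proof (cases "t0 = 0")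
    case False
    have artanh_nonneg: "0 \<le> artanh x" if "0 \<le> x" "x < 1" for x :: real
      using that by (simp add: artanh_def)
    have "t0 * A < 1"
      using \<open>t0 \<le> 1\<close> \<open>A < 1\<close> \<open>0 \<le> A\<close> mult_left_le_one_le[of A t0] \<open>0 \<le> t0\<close> by linarith
    then show ?thesis
      using False \<open>t0 \<in> T\<close> range[of 0] artanh_nonneg[of "t0 * A"] artanh_nonneg[of "\<rho> 0"]
        \<open>0 \<le> t0\<close> \<open>0 \<le> A\<close> by (auto simp: T_def)
  qed simp
  ultimately show ?thesis
    by simp
qed

theorem lemma3p1:
  fixes f :: "complex \<Rightarrow> real ^ 'n"
  assumes "CARD('n) \<ge> 3"
    and "conformal_minimal_immersion f (ball 0 1)"
    and "f ` ball 0 1 \<subseteq> ball 0 1"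
    and "a \<in> ball 0 1"
  shows "norm (f a) \<le> (norm a + norm (f 0)) / (1 + norm a * norm (f 0))"
proof -
  define \<rho> where "\<rho> t = norm (f (of_real t * a))" for t
  have ray: "of_real t * a \<in> ball 0 1" if "t \<in> {0..1}" for t
    using that assms(4) mult_left_le_one_le[of "norm a" t] by (simp add: norm_mult)
  have range: "0 \<le> \<rho> t \<and> \<rho> t < 1" if "t \<in> {0..1}" for t
    using assms(3) ray[OF that] by (force simp: \<rho>_def)
  have "continuous_on {0..1} \<rho>"
    unfolding \<rho>_def using ray
    by (intro continuous_on_norm continuous_on_compose2[OF
        conformal_minimal_immersion_imp_continuous_on[OF assms(2)]]) (auto intro!: continuous_intros)
  then have "artanh (\<rho> 1) \<le> artanh (norm a) + artanh (\<rho> 0)"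
    using assms(4) range ray unfolding \<rho>_def
    by (intro artanh_growth_bound conformal_minimal_immersion_norm_ray_deriv[OF assms(2,3)]) auto
  then show ?thesis
    using range[of 0] range[of 1] assms(4) by (intro le_add_div_of_artanh_le) (auto simp: \<rho>_def)
qed

end
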